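(* Every normal finite $C$-space is weakly infinite-dimensional in the sense of Smirnov.
   Context: A set is functionally open if it is a cozero set. $X$ is a finite $C$-space if for every sequence $\{\omega_n\}$ of finite covers of $X$ by functionally open sets there exist $k$ and finite families $\gamma_1,\dots,\gamma_k$ of pairwise disjoint functionally open sets such that each $\gamma_n$ refines $\omega_n$ and $\bigcup_{n=1}^k\gamma_n$ covers $X$. A normal space $X$ is weakly infinite-dimensional in the sense of Smirnov if for every sequence $\{(A_i,B_i)\}_{i\in\mathbb N}$ of pairs of disjoint closed subsets of $X$ there exist partitions $L_i$ between $A_i$ and $B_i$ and $k$ such that $\bigcap_{i=1}^k L_i=\emptyset$. *)

theory Defs
  imports "HOL-Analysis.Analysis"
begin

definition functionally_open :: "'a topology \<Rightarrow> 'a set \<Rightarrow> bool" where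
  "functionally_open X U \<longleftrightarrow>
     (\<exists>f. continuous_map X euclideanreal f \<and> U = {x \<in> topspace X. f x \<noteq> 0})"

definition fo_finite_cover :: "'a topology \<Rightarrow> 'a set set \<Rightarrow> bool" where
  "fo_finite_cover X \<omega> \<longleftrightarrow>
     finite \<omega> \<and> (\<forall>U\<in>\<omega>. functionally_open X U) \<and> topspace X \<subseteq> \<Union>\<omega>"

definition refines :: "'a set set \<Rightarrow> 'a set set \<Rightarrow> bool" where
  "refines \<gamma> \<omega> \<longleftrightarrow> (\<forall>V\<in>\<gamma>. \<exists>U\<in>\<omega>. V \<subseteq> U)"

definition finite_C_space :: "'a topology \<Rightarrow> bool" where
  "finite_C_space X \<longleftrightarrow>
     (\<forall>\<omega> :: nat \<Rightarrow> 'a set set. (\<forall>n. fo_finite_cover X (\<omega> n)) \<longrightarrow>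
        (\<exists>k \<gamma>. (\<forall>n<k. finite (\<gamma> n) \<and> (\<forall>V\<in>\<gamma> n. functionally_open X V)
                     \<and> pairwise disjnt (\<gamma> n) \<and> refines (\<gamma> n) (\<omega> n))
              \<and> topspace X \<subseteq> (\<Union>n<k. \<Union>(\<gamma> n))))"

definition partition_between :: "'a topology \<Rightarrow> 'a set \<Rightarrow> 'a set \<Rightarrow> 'a set \<Rightarrow> bool" where
  "partition_between X A B L \<longleftrightarrow>
     closedin X L \<and>
     (\<exists>U V. openin X U \<and> openin X V \<and> disjnt U V \<and> A \<subseteq> U \<and> B \<subseteq> V
            \<and> topspace X - L = U \<union> V)"

definition smirnov_wid :: "'a topology \<Rightarrow> bool" where
  "smirnov_wid X \<longleftrightarrow>
     (\<forall>A B :: nat \<Rightarrow> 'a set.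
        (\<forall>i. closedin X (A i) \<and> closedin X (B i) \<and> disjnt (A i) (B i)) \<longrightarrow>
        (\<exists>L k. (\<forall>i. partition_between X (A i) (B i) (L i)) \<and> k \<ge> 1 \<and> (\<Inter>i<k. L i) = {}))"

end

theory Submission
  imports Defs
begin

text \<open>Take Urysohn functions \<open>f\<^sub>i\<close> with \<open>f\<^sub>i = 0\<close> on \<open>A\<^sub>i\<close> and \<open>f\<^sub>i = 1\<close> on \<open>B\<^sub>i\<close>; the sets
  \<open>{f\<^sub>i < 2/3}\<close> and \<open>{f\<^sub>i > 1/3}\<close> form a finite functionally open cover \<open>\<omega>\<^sub>i\<close>. The \<open>C\<close>-property
  yields disjoint open refinements \<open>\<gamma>\<^sub>1, \<dots>, \<gamma>\<^sub>k\<close> covering \<open>X\<close>. Splitting \<open>\<gamma>\<^sub>i\<close> into the members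
  inside \<open>{f\<^sub>i < 2/3}\<close> (union \<open>P\<close>) and the others (union \<open>Q \<subseteq> {f\<^sub>i > 1/3}\<close>), the disjoint open
  sets \<open>{f\<^sub>i < 1/3} \<union> P\<close> and \<open>{f\<^sub>i > 2/3} \<union> Q\<close> leave a partition \<open>L\<^sub>i\<close> between \<open>A\<^sub>i\<close> and \<open>B\<^sub>i\<close>
  that misses \<open>\<Union>\<gamma>\<^sub>i\<close>. As the \<open>\<Union>\<gamma>\<^sub>i\<close> cover \<open>X\<close>, \<open>L\<^sub>1 \<inter> \<dots> \<inter> L\<^sub>k = {}\<close>.\<close>

lemma functionally_open_imp_openin: "functionally_open X U \<Longrightarrow> openin X U"
  unfolding functionally_open_def
  by (auto intro!: openin_continuous_map_preimage[where Y=euclideanreal and U="-{0}", simplified])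

lemma functionally_open_sublevel:
  assumes "continuous_map X euclideanreal f"
  shows "functionally_open X {x \<in> topspace X. f x < c}"
  unfolding functionally_open_def
proof (intro exI conjI)
  show "continuous_map X euclideanreal (\<lambda>x. max 0 (c - f x))"
    using assms by (intro continuous_intros) auto
qed auto

lemma functionally_open_superlevel:
  assumes "continuous_map X euclideanreal f"
  shows "functionally_open X {x \<in> topspace X. f x > c}"
  unfolding functionally_open_def
proof (intro exI conjI)
  show "continuous_map X euclideanreal (\<lambda>x. max 0 (f x - c))"
    using assms by (intro continuous_intros) auto
qed auto

lemma fo_finite_cover_overlapping_levels:
  assumes "continuous_map X euclideanreal f" and "a < b"
  shows "fo_finite_cover X {{x \<in> topspace X. f x < b}, {x \<in> topspace X. f x > a}}"
  using assms functionally_open_sublevel functionally_open_superlevel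
  unfolding fo_finite_cover_def by force

lemma partition_between_complement:
  assumes "openin X G" "openin X H" "disjnt G H" "A \<subseteq> G" "B \<subseteq> H"
  shows "partition_between X A B (topspace X - (G \<union> H))"
proof -
  have "topspace X - (topspace X - (G \<union> H)) = G \<union> H"
    using assms(1,2) openin_subset by blast
  then show ?thesis
    unfolding partition_between_def using assms by blast
qed

lemma partition_between_subset_topspace: "partition_between X A B L \<Longrightarrow> L \<subseteq> topspace X"
  unfolding partition_between_def by (simp add: closedin_subset)

lemma disjoint_refinement_of_pair_splits:
  assumes "\<forall>W\<in>\<gamma>. openin X W" "pairwise disjnt \<gamma>" "refines \<gamma> {U, V}"
  obtains P Q where "openin X P" "openin X Q" "disjnt P Q" "P \<subseteq> U" "Q \<subseteq> V" "\<Union>\<gamma> = P \<union> Q"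
proof
  let ?P = "\<Union>{W\<in>\<gamma>. W \<subseteq> U}" and ?Q = "\<Union>{W\<in>\<gamma>. \<not> W \<subseteq> U}"
  show "openin X ?P" "openin X ?Q"
    using assms(1) by auto
  show "disjnt ?P ?Q"
    using assms(2) unfolding pairwise_def disjnt_def by blast
  show "?Q \<subseteq> V"
    using assms(3) unfolding refines_def by blast
qed auto

lemma partition_between_avoiding_refinement:
  assumes f: "continuous_map X euclideanreal f" "\<forall>x\<in>A. f x < a" "\<forall>x\<in>B. f x > b"
    and AB: "A \<subseteq> topspace X" "B \<subseteq> topspace X"
    and \<gamma>: "\<forall>W\<in>\<gamma>. openin X W" "pairwise disjnt \<gamma>"
      "refines \<gamma> {{x \<in> topspace X. f x < b}, {x \<in> topspace X. f x > a}}"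
    and "a \<le> b"
  obtains L where "partition_between X A B L" "L \<inter> \<Union>\<gamma> = {}"
proof -
  obtain P Q where PQ: "openin X P" "openin X Q" "disjnt P Q"
    and P: "P \<subseteq> {x \<in> topspace X. f x < b}" and Q: "Q \<subseteq> {x \<in> topspace X. f x > a}"
    and "\<Union>\<gamma> = P \<union> Q"
    by (rule disjoint_refinement_of_pair_splits[OF \<gamma>])
  define G where "G = {x \<in> topspace X. f x < a} \<union> P"
  define H where "H = {x \<in> topspace X. f x > b} \<union> Q"
  have "openin X G"
    unfolding G_def
    by (intro openin_Un PQ(1) functionally_open_imp_openin functionally_open_sublevel f(1))
  moreover have "openin X H"
    unfolding H_def
    by (intro openin_Un PQ(2) functionally_open_imp_openin functionally_open_superlevel f(1))
  moreover have "disjnt G H"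
    using PQ(3) P Q \<open>a \<le> b\<close> unfolding G_def H_def disjnt_def by auto
  moreover have "A \<subseteq> G" "B \<subseteq> H"
    using f AB unfolding G_def H_def by auto
  ultimately have "partition_between X A B (topspace X - (G \<union> H))"
    by (rule partition_between_complement)
  moreover have "(topspace X - (G \<union> H)) \<inter> \<Union>\<gamma> = {}"
    using \<open>\<Union>\<gamma> = P \<union> Q\<close> unfolding G_def H_def by blast
  ultimately show thesis
    using that by blast
qed

definition separating_cover :: "'a topology \<Rightarrow> 'a set \<Rightarrow> 'a set \<Rightarrow> 'a set set \<Rightarrow> bool" where
  "separating_cover X A B \<omega> \<longleftrightarrow> fo_finite_cover X \<omega> \<and>
     (\<forall>\<gamma>. (\<forall>W\<in>\<gamma>. openin X W) \<and> pairwise disjnt \<gamma> \<and> refines \<gamma> \<omega> \<longrightarrow>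
          (\<exists>L. partition_between X A B L \<and> L \<inter> \<Union>\<gamma> = {}))"

lemma normal_space_separating_cover:
  assumes "normal_space X" "closedin X A" "closedin X B" "disjnt A B"
  shows "\<exists>\<omega>. separating_cover X A B \<omega>"
proof -
  have "\<exists>f. continuous_map X euclideanreal f \<and> f ` A \<subseteq> {0} \<and> f ` B \<subseteq> {1}"
    using assms unfolding normal_space_iff_Urysohn_alt by blast
  then obtain f where f: "continuous_map X euclideanreal f" "f ` A \<subseteq> {0}" "f ` B \<subseteq> {1}"
    by blast
  have AB: "A \<subseteq> topspace X" "B \<subseteq> topspace X"
    using assms(2,3) closedin_subset by auto
  have fA: "\<forall>x\<in>A. f x < 1/3" and fB: "\<forall>x\<in>B. f x > 2/3"
    using f(2,3) by auto
  let ?\<omega> = "{{x \<in> topspace X. f x < 2/3}, {x \<in> topspace X. f x > 1/3}}"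
  show ?thesis
    unfolding separating_cover_def
  proof (intro exI[of _ ?\<omega>] conjI allI impI)
    show "fo_finite_cover X ?\<omega>"
      by (rule fo_finite_cover_overlapping_levels[OF f(1)]) simp
    fix \<gamma>
    assume "(\<forall>W\<in>\<gamma>. openin X W) \<and> pairwise disjnt \<gamma> \<and> refines \<gamma> ?\<omega>"
    then have "\<forall>W\<in>\<gamma>. openin X W" "pairwise disjnt \<gamma>" "refines \<gamma> ?\<omega>"
      by auto
    then obtain L where "partition_between X A B L" "L \<inter> \<Union>\<gamma> = {}"
      by (rule partition_between_avoiding_refinement[OF f(1) fA fB AB]) simp
    then show "\<exists>L. partition_between X A B L \<and> L \<inter> \<Union>\<gamma> = {}"
      by blast
  qed
qed

text \<open>Intersecting over \<open>Suc k\<close> rather than \<open>k\<close> indices avoids the empty intersection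
  \<open>UNIV\<close> when \<open>k = 0\<close>.\<close>
lemma Inter_empty_if_avoiding_cover:
  assumes "\<And>i. L i \<subseteq> S" "S \<subseteq> (\<Union>i<k. G i)" "\<And>i. i < k \<Longrightarrow> L i \<inter> G i = {}"
  shows "(\<Inter>i<Suc k. L i) = {}"
proof -
  have "x \<notin> (\<Inter>i<Suc k. L i)" for x
  proof
    assume x: "x \<in> (\<Inter>i<Suc k. L i)"
    then have "x \<in> L 0"
      by simp
    then obtain i where "i < k" "x \<in> G i"
      using assms(1,2) by blast
    moreover have "x \<in> L i"
      using x \<open>i < k\<close> by simp
    ultimately show False
      using assms(3) by blast
  qed
  then show ?thesis
    by blast
qed

theorem lemma2p3:
  fixes X :: "'a topology"
  assumes "normal_space X" and "finite_C_space X"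
  shows "smirnov_wid X"
  unfolding smirnov_wid_def
proof (intro allI impI)
  fix A B :: "nat \<Rightarrow> 'a set"
  assume "\<forall>i. closedin X (A i) \<and> closedin X (B i) \<and> disjnt (A i) (B i)"
  then have "\<forall>i. \<exists>\<omega>. separating_cover X (A i) (B i) \<omega>"
    using normal_space_separating_cover[OF assms(1)] by blast
  then obtain \<omega> where \<omega>: "\<forall>i. separating_cover X (A i) (B i) (\<omega> i)"
    by (rule choice[THEN exE])
  then have cover: "\<forall>i. fo_finite_cover X (\<omega> i)"
    unfolding separating_cover_def by blast
  then obtain k \<gamma> where \<gamma>: "\<forall>i<k. (\<forall>W\<in>\<gamma> i. functionally_open X W)
        \<and> pairwise disjnt (\<gamma> i) \<and> refines (\<gamma> i) (\<omega> i)"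
    and covered: "topspace X \<subseteq> (\<Union>i<k. \<Union>(\<gamma> i))"
    using assms(2) unfolding finite_C_space_def by (elim allE[of _ \<omega>] impE exE conjE) blast+
  define \<gamma>' where "\<gamma>' i = (if i < k then \<gamma> i else {})" for i
  have "(\<forall>W\<in>\<gamma>' i. openin X W) \<and> pairwise disjnt (\<gamma>' i) \<and> refines (\<gamma>' i) (\<omega> i)" for i
    using \<gamma> by (auto simp: \<gamma>'_def refines_def intro: functionally_open_imp_openin)
  then have "\<exists>L. partition_between X (A i) (B i) L \<and> L \<inter> \<Union>(\<gamma>' i) = {}" for i
    using \<omega> unfolding separating_cover_def by blast
  then obtain L where L: "\<And>i. partition_between X (A i) (B i) (L i)"
    "\<And>i. L i \<inter> \<Union>(\<gamma>' i) = {}"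
    by metis
  have "(\<Inter>i<Suc k. L i) = {}"
  proof (rule Inter_empty_if_avoiding_cover[OF partition_between_subset_topspace[OF L(1)] covered])
    show "L i \<inter> \<Union>(\<gamma> i) = {}" if "i < k" for i
      using L(2)[of i] that unfolding \<gamma>'_def by simp
  qed
  then show "\<exists>L k. (\<forall>i. partition_between X (A i) (B i) (L i)) \<and> k \<ge> 1 \<and> (\<Inter>i<k. L i) = {}"
    using L(1) by (intro exI[of _ L] exI[of _ "Suc k"]) auto
qed

end
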